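(* Let $A$ be a dilation, $X$ a concave ball quasi-Banach function space, $q\in[1,\infty)$, $d\in\mathbb Z_+$ and $s\in(0,1]$. Then $\mathcal L^A_{X,q,d,s}(\mathbb R^n)=\mathcal L^A_{X,q,d}(\mathbb R^n)$ with equivalent quasi-norms.
   Context: A real $n\times n$ matrix $A$ is a dilation if all its eigenvalues have modulus $>1$. Let $b:=|\det A|$. Fix an open ellipsoid $\Delta$ symmetric about the origin with $|\Delta|=1$ and $r>1$ with $\Delta\subset r\Delta\subset A\Delta$; put $B_k:=A^k\Delta$ ($k\in\mathbb Z$) and $\mathcal B:=\{x+B_k:x\in\mathbb R^n,k\in\mathbb Z\}$. Let $\mathscr M(\mathbb R^n)$ be the set of measurable functions. A quasi-normed linear space $X\subset\mathscr M(\mathbb R^n)$ whose quasi-norm is defined on all of $\mathscr M(\mathbb R^n)$ is a ball quasi-Banach function space if: (i) $\|f\|_X=0\Rightarrow f=0$ a.e.; (ii) $|g|\le|f|$ a.e. $\Rightarrow\|g\|_X\le\|f\|_X$; (iii) $0\le f_m\uparrow f$ a.e. $\Rightarrow\|f_m\|_X\uparrow\|f\|_X$; (iv) $\mathbf 1_B\in X$ for all $B\in\mathcal B$. $X$ is concave if there is $C>0$ such that $\sum_{k\in\mathbb N}\|f_k\|_X\le C\|\sum_{k\in\mathbb N}|f_k|\|_X$ for all $\{f_k\}\subset\mathscr M(\mathbb R^n)$. $\mathcal P_d$ denotes polynomials of degree $\le d$; $P^d_Bg$ is the unique $P\in\mathcal P_d$ with $\int_B(g-P)h=0$ for all $h\in\mathcal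 P_d$. $\mathcal L^A_{X,q,d,s}(\mathbb R^n)$ is the set of $f\in L^q_{\mathrm{loc}}$ with $$\|f\|_{\mathcal L^A_{X,q,d,s}}:=\sup\left\|\left\{\sum_{i=1}^m\left[\frac{\lambda_i}{\|\mathbf 1_{B^{(i)}}\|_X}\right]^s\mathbf 1_{B^{(i)}}\right\}^{1/s}\right\|_X^{-1}\sum_{j=1}^m\frac{\lambda_j|B^{(j)}|}{\|\mathbf 1_{B^{(j)}}\|_X}\left[\frac1{|B^{(j)}|}\int_{B^{(j)}}|f-P^d_{B^{(j)}}f|^q\right]^{1/q}<\infty$$ (sup over $m\in\mathbb N$, $B^{(j)}\in\mathcal B$, $\lambda_j\ge0$ with $\sum_j\lambda_j\neq0$). $\mathcal L^A_{X,q,d}(\mathbb R^n)$ is the set of $f\in L^q_{\mathrm{loc}}$ with $\|f\|_{\mathcal L^A_{X,q,d}}:=\sup_{B\in\mathcal B}\frac{|B|}{\|\mathbf 1_B\|_X}\left[\frac1{|B|}\int_B|f-P^d_Bf|^q\right]^{1/q}<\infty$. Elements are identified modulo $\mathcal P_d$. *)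

theory Defs
  imports "HOL-Analysis.Analysis"
begin

definition cmat :: "real^'n^'n \<Rightarrow> complex^'n^'n" where
  "cmat A = (\<chi> i j. complex_of_real (A $ i $ j))"

definition dilation :: "real^'n^'n \<Rightarrow> bool" where
  "dilation A \<longleftrightarrow> (\<forall>\<mu>::complex. (\<exists>v::complex^'n. v \<noteq> 0 \<and> cmat A *v v = \<mu> *s v) \<longrightarrow> 1 < cmod \<mu>)"

definition origin_ellipsoid :: "(real^'n) set \<Rightarrow> bool" where
  "origin_ellipsoid E \<longleftrightarrow> (\<exists>P::real^'n^'n. invertible P \<and> E = (\<lambda>y. P *v y) ` ball 0 1)"

definition matpow_image :: "real^'n^'n \<Rightarrow> int \<Rightarrow> (real^'n) set \<Rightarrow> (real^'n) set" where
  "matpow_image A k S =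
     (if 0 \<le> k then (((\<lambda>y. A *v y) ^^ nat k) ` S)
      else (((\<lambda>y. matrix_inv A *v y) ^^ nat (- k)) ` S))"

definition dil_balls :: "real^'n^'n \<Rightarrow> (real^'n) set \<Rightarrow> (real^'n) set set" where
  "dil_balls A \<Delta> = {(\<lambda>y. x + y) ` matpow_image A k \<Delta> | x k. True}"

text \<open>The quasi-norm N is defined on all functions (values in [0,\<infinity>]); only its values on
  Lebesgue measurable functions matter. X = {f measurable. N f < \<infinity>}.\<close>
definition ball_QBFS :: "real^'n^'n \<Rightarrow> (real^'n) set \<Rightarrow> ((real^'n \<Rightarrow> real) \<Rightarrow> ennreal) \<Rightarrow> bool" where
  "ball_QBFS A \<Delta> N \<longleftrightarrow>
     \<comment> \<open>quasi-norm: homogeneity and quasi-triangle inequality\<close>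
     (\<forall>f c. f \<in> borel_measurable lebesgue \<longrightarrow> N (\<lambda>x. c * f x) = ennreal \<bar>c\<bar> * N f) \<and>
     (\<exists>K\<ge>1. \<forall>f g. f \<in> borel_measurable lebesgue \<longrightarrow> g \<in> borel_measurable lebesgue \<longrightarrow>
         N (\<lambda>x. f x + g x) \<le> ennreal K * (N f + N g)) \<and>
     \<comment> \<open>(i)\<close>
     (\<forall>f. f \<in> borel_measurable lebesgue \<longrightarrow> N f = 0 \<longrightarrow> (AE x in lebesgue. f x = 0)) \<and>
     \<comment> \<open>(ii)\<close>
     (\<forall>f g. f \<in> borel_measurable lebesgue \<longrightarrow> g \<in> borel_measurable lebesgue \<longrightarrow>
         (AE x in lebesgue. \<bar>g x\<bar> \<le> \<bar>f x\<bar>) \<longrightarrow> N g \<le> N f) \<and>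
     \<comment> \<open>(iii) Fatou property\<close>
     (\<forall>F f. (\<forall>m. F m \<in> borel_measurable lebesgue) \<longrightarrow> f \<in> borel_measurable lebesgue \<longrightarrow>
         (AE x in lebesgue. (\<forall>m. 0 \<le> F m x \<and> F m x \<le> F (Suc m) x) \<and> (\<lambda>m. F m x) \<longlonglongrightarrow> f x) \<longrightarrow>
         (\<lambda>m. N (F m)) \<longlonglongrightarrow> N f) \<and>
     \<comment> \<open>(iv)\<close>
     (\<forall>B\<in>dil_balls A \<Delta>. N (indicator B) < \<infinity>)"

text \<open>Concavity. (Families with pointwise divergent sum are excluded.)\<close>
definition concave_QBFS :: "((real^'n \<Rightarrow> real) \<Rightarrow> ennreal) \<Rightarrow> bool" where
  "concave_QBFS N \<longleftrightarrow> (\<exists>C>0. \<forall>F::nat \<Rightarrow> real^'n \<Rightarrow> real.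
      (\<forall>k. F k \<in> borel_measurable lebesgue) \<longrightarrow> (\<forall>x. summable (\<lambda>k. \<bar>F k x\<bar>)) \<longrightarrow>
      (\<Sum>k. N (F k)) \<le> ennreal C * N (\<lambda>x. \<Sum>k. \<bar>F k x\<bar>))"

definition monomial_fun :: "('n::finite \<Rightarrow> nat) \<Rightarrow> real^'n \<Rightarrow> real" where
  "monomial_fun \<alpha> x = (\<Prod>i\<in>UNIV. (x $ i) ^ \<alpha> i)"

definition poly_fun :: "nat \<Rightarrow> (real^'n::finite \<Rightarrow> real) set" where
  "poly_fun d = {P. \<exists>c::('n \<Rightarrow> nat) \<Rightarrow> real.
      P = (\<lambda>x. \<Sum>\<alpha>\<in>{\<alpha>. sum \<alpha> UNIV \<le> d}. c \<alpha> * monomial_fun \<alpha> x)}"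

definition poly_proj :: "nat \<Rightarrow> (real^'n::finite) set \<Rightarrow> (real^'n \<Rightarrow> real) \<Rightarrow> real^'n \<Rightarrow> real" where
  "poly_proj d B g = (THE P. P \<in> poly_fun d \<and>
      (\<forall>h\<in>poly_fun d. (LINT x:B|lebesgue. (g x - P x) * h x) = 0))"

definition Lq_loc :: "real \<Rightarrow> (real^'n::finite \<Rightarrow> real) set" where
  "Lq_loc q = {f \<in> borel_measurable lebesgue. \<forall>K. compact K \<longrightarrow>
      (\<integral>\<^sup>+x\<in>K. ennreal (\<bar>f x\<bar> powr q) \<partial>lebesgue) < \<infinity>}"

definition nX :: "((real^'n::finite \<Rightarrow> real) \<Rightarrow> ennreal) \<Rightarrow> (real^'n) set \<Rightarrow> real" where
  "nX N B = enn2real (N (indicator B))"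

definition osc_q :: "real \<Rightarrow> nat \<Rightarrow> (real^'n::finite) set \<Rightarrow> (real^'n \<Rightarrow> real) \<Rightarrow> real" where
  "osc_q q d B f = ((1 / measure lebesgue B) *
      enn2real (\<integral>\<^sup>+x\<in>B. ennreal (\<bar>f x - poly_proj d B f x\<bar> powr q) \<partial>lebesgue)) powr (1 / q)"

definition L_norm :: "((real^'n::finite \<Rightarrow> real) \<Rightarrow> ennreal) \<Rightarrow> real^'n^'n \<Rightarrow> (real^'n) set
    \<Rightarrow> real \<Rightarrow> nat \<Rightarrow> (real^'n \<Rightarrow> real) \<Rightarrow> ennreal" where
  "L_norm N A \<Delta> q d f = (SUP B\<in>dil_balls A \<Delta>. ennreal (measure lebesgue B / nX N B * osc_q q d B f))"

definition Ls_norm :: "((real^'n::finite \<Rightarrow> real) \<Rightarrow> ennreal) \<Rightarrow> real^'n^'n \<Rightarrow> (real^'n) set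
    \<Rightarrow> real \<Rightarrow> nat \<Rightarrow> real \<Rightarrow> (real^'n \<Rightarrow> real) \<Rightarrow> ennreal" where
  "Ls_norm N A \<Delta> q d s f =
    (SUP (m, B, lam)\<in>{(m, B, lam). 1 \<le> (m::nat) \<and> (\<forall>i<m. B i \<in> dil_balls A \<Delta>) \<and>
                          (\<forall>i<m. 0 \<le> (lam i::real)) \<and> (\<Sum>i<m. lam i) \<noteq> 0}.
       ennreal ((\<Sum>j<m. lam j * measure lebesgue (B j) / nX N (B j) * osc_q q d (B j) f) /
         enn2real (N (\<lambda>x. (\<Sum>i<m. (lam i / nX N (B i)) powr s * indicator (B i) x) powr (1 / s)))))"

definition L_space where
  "L_space N A \<Delta> q d = {f \<in> Lq_loc q. L_norm N A \<Delta> q d f < \<infinity>}"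

definition Ls_space where
  "Ls_space N A \<Delta> q d s = {f \<in> Lq_loc q. Ls_norm N A \<Delta> q d s f < \<infinity>}"

end

theory Submission
  imports Defs
begin

text \<open>
  A single ball with weight 1 is an admissible family in \<^const>\<open>Ls_norm\<close>, so the s-norm
  dominates the Campanato norm. Conversely, given balls \<open>B i\<close> with weights \<open>lam i\<close>, put
  \<open>c i = lam i / nX N (B i)\<close>. The numerator of the quotient in the s-norm is at most the
  Campanato norm times \<open>\<Sum>i. N (c i * indicator (B i))\<close>, which by concavity is at most
  \<open>C * N (\<Sum>i. c i * indicator (B i))\<close>. Since \<open>s \<le> 1\<close>, the last sum is pointwise at most
  \<open>(\<Sum>i. c i powr s * indicator (B i)) powr (1 / s)\<close>, whose quasi-norm is the denominator.
\<close>

lemma sum_le_powr_sum_powr: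
  fixes a :: "'i \<Rightarrow> real"
  assumes "finite I" and nonneg: "\<And>i. i \<in> I \<Longrightarrow> 0 \<le> a i" and "0 < s" "s \<le> 1"
  shows "(\<Sum>i\<in>I. a i) \<le> (\<Sum>i\<in>I. a i powr s) powr (1 / s)"
proof -
  define S where "S = (\<Sum>i\<in>I. a i)"
  have "0 \<le> S" unfolding S_def using nonneg by (simp add: sum_nonneg)
  show ?thesis
  proof (cases "S = 0")
    case True
    then show ?thesis unfolding S_def by simp
  next
    case False
    with \<open>0 \<le> S\<close> have "0 < S" by simp
    have frac_le: "a i / S \<le> (a i / S) powr s" if "i \<in> I" for i
    proof -
      have "a i \<le> S" unfolding S_def using assms that by (intro member_le_sum) auto
      then have "(a i / S) powr 1 \<le> (a i / S) powr s"
        using nonneg[OF that] \<open>0 < S\<close> assms by (intro powr_mono') auto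
      then show ?thesis using nonneg[OF that] \<open>0 < S\<close> by simp
    qed
    have "S powr s = (\<Sum>i\<in>I. a i / S) * S powr s"
      using \<open>0 < S\<close> by (simp add: S_def flip: sum_divide_distrib)
    also have "\<dots> \<le> (\<Sum>i\<in>I. (a i / S) powr s) * S powr s"
      using frac_le by (intro mult_right_mono sum_mono) auto
    also have "\<dots> = (\<Sum>i\<in>I. a i powr s)"
      using nonneg \<open>0 < S\<close> by (simp add: sum_distrib_right powr_divide)
    finally have "(S powr s) powr (1 / s) \<le> (\<Sum>i\<in>I. a i powr s) powr (1 / s)"
      using \<open>0 < s\<close> by (intro powr_mono2) auto
    then show ?thesis using \<open>0 < S\<close> \<open>0 < s\<close> by (simp add: S_def powr_powr)
  qed
qed

lemma linear_funpow:
  fixes f :: "'a::real_vector \<Rightarrow> 'a"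
  assumes "linear f"
  shows "linear (f ^^ k)"
proof (induction k)
  case 0
  show ?case by (simp add: linear_ident)
next
  case (Suc k)
  show ?case using linear_compose[OF Suc assms] by (simp add: o_def)
qed

lemma linear_image_in_sets_lebesgue:
  fixes f :: "'a::euclidean_space \<Rightarrow> 'a"
  assumes "linear f" and "S \<in> sets lebesgue"
  shows "f ` S \<in> sets lebesgue"
  using assms by (intro differentiable_image_in_sets_lebesgue linear_imp_differentiable_on) auto

lemma matpow_image_in_sets_lebesgue:
  assumes "S \<in> sets lebesgue"
  shows "matpow_image A k S \<in> sets lebesgue"
  unfolding matpow_image_def
  using assms by (auto intro!: linear_image_in_sets_lebesgue linear_funpow matrix_vector_mul_linear)

lemma dil_balls_in_sets_lebesgue:
  assumes "\<Delta> \<in> sets lebesgue" and "B \<in> dil_balls A \<Delta>"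
  shows "B \<in> sets lebesgue"
  using assms unfolding dil_balls_def
  by (auto intro!: lebesgue_sets_translation matpow_image_in_sets_lebesgue)

lemma origin_ellipsoid_in_sets_lebesgue:
  "origin_ellipsoid E \<Longrightarrow> E \<in> sets lebesgue"
  unfolding origin_ellipsoid_def
  by (auto intro!: linear_image_in_sets_lebesgue matrix_vector_mul_linear)

lemma ball_QBFS_scaled_indicator:
  assumes "ball_QBFS A \<Delta> N" and "\<Delta> \<in> sets lebesgue" and "B \<in> dil_balls A \<Delta>"
  shows "N (\<lambda>x. c * indicator B x) = ennreal (\<bar>c\<bar> * nX N B)"
proof -
  have "N (indicator B) < \<infinity>" and "B \<in> sets lebesgue"
    using assms dil_balls_in_sets_lebesgue unfolding ball_QBFS_def by blast+
  moreover have "N (\<lambda>x. c * indicator B x) = ennreal \<bar>c\<bar> * N (indicator B)"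
    using assms(1) \<open>B \<in> sets lebesgue\<close> unfolding ball_QBFS_def by simp
  ultimately show ?thesis
    unfolding nX_def by (simp add: ennreal_enn2real less_top ennreal_mult)
qed

definition finitely_concave :: "real \<Rightarrow> ((real^'n::finite \<Rightarrow> real) \<Rightarrow> ennreal) \<Rightarrow> bool" where
  "finitely_concave C N \<longleftrightarrow> (\<forall>(m::nat) F. (\<forall>i<m. F i \<in> borel_measurable lebesgue) \<longrightarrow>
      (\<Sum>i<m. N (F i)) \<le> ennreal C * N (\<lambda>x. \<Sum>i<m. \<bar>F i x\<bar>))"

lemma concave_QBFS_imp_finitely_concave:
  assumes "concave_QBFS N"
  obtains C where "0 < C" and "finitely_concave C N"
proof -
  obtain C where "0 < C" and conc: "\<And>F::nat \<Rightarrow> real^'a \<Rightarrow> real.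
      (\<forall>k. F k \<in> borel_measurable lebesgue) \<Longrightarrow> (\<forall>x. summable (\<lambda>k. \<bar>F k x\<bar>)) \<Longrightarrow>
      (\<Sum>k. N (F k)) \<le> ennreal C * N (\<lambda>x. \<Sum>k. \<bar>F k x\<bar>)"
    using assms unfolding concave_QBFS_def by blast
  have "finitely_concave C N"
    unfolding finitely_concave_def
  proof (intro allI impI)
    fix m and F :: "nat \<Rightarrow> real^'a \<Rightarrow> real"
    assume F: "\<forall>i<m. F i \<in> borel_measurable lebesgue"
    define G where "G k = (if k < m then F k else (\<lambda>x. 0))" for k
    have G_sums: "(\<lambda>k. \<bar>G k x\<bar>) sums (\<Sum>i<m. \<bar>F i x\<bar>)" for x
      using sums_finite[of "{..<m}" "\<lambda>k. \<bar>G k x\<bar>"] by (auto simp: G_def)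
    have "(\<Sum>i<m. N (F i)) = (\<Sum>i<m. N (G i))"
      by (simp add: G_def)
    also have "\<dots> \<le> (\<Sum>k. N (G k))"
      by (rule sum_le_suminf) auto
    also have "\<dots> \<le> ennreal C * N (\<lambda>x. \<Sum>k. \<bar>G k x\<bar>)"
      using F G_sums[THEN sums_summable] by (intro conc) (auto simp: G_def)
    also have "(\<lambda>x. \<Sum>k. \<bar>G k x\<bar>) = (\<lambda>x. \<Sum>i<m. \<bar>F i x\<bar>)"
      by (rule ext, rule sums_unique[OF G_sums, symmetric])
    finally show "(\<Sum>i<m. N (F i)) \<le> ennreal C * N (\<lambda>x. \<Sum>i<m. \<bar>F i x\<bar>)" .
  qed
  with \<open>0 < C\<close> show ?thesis by (rule that)
qed

lemma finitely_concave_sum_nX_le: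
  fixes m :: nat
  assumes QBFS: "ball_QBFS A \<Delta> N" and \<Delta>: "\<Delta> \<in> sets lebesgue" and conc: "finitely_concave C N"
    and "0 < s" and "s \<le> 1"
    and B: "\<And>i. i < m \<Longrightarrow> B i \<in> dil_balls A \<Delta>" and c: "\<And>i. i < m \<Longrightarrow> 0 \<le> c i"
  shows "ennreal (\<Sum>i<m. c i * nX N (B i))
    \<le> ennreal C * N (\<lambda>x. (\<Sum>i<m. c i powr s * indicator (B i) x) powr (1 / s))"
proof -
  define h where "h x = (\<Sum>i<m. c i * indicator (B i) x)" for x
  define g where "g x = (\<Sum>i<m. c i powr s * indicator (B i) x) powr (1 / s)" for x
  have B_sets: "B i \<in> sets lebesgue" if "i < m" for i
    using dil_balls_in_sets_lebesgue[OF \<Delta> B[OF that]] .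
  have h_le_g: "\<bar>h x\<bar> \<le> \<bar>g x\<bar>" for x
  proof -
    have "0 \<le> h x" unfolding h_def using c by (intro sum_nonneg) auto
    moreover have "h x \<le> (\<Sum>i<m. (c i * indicator (B i) x) powr s) powr (1 / s)"
      unfolding h_def using c \<open>0 < s\<close> \<open>s \<le> 1\<close> by (intro sum_le_powr_sum_powr) auto
    moreover have "(\<Sum>i<m. (c i * indicator (B i) x) powr s) = (\<Sum>i<m. c i powr s * indicator (B i) x)"
      by (intro sum.cong) (auto simp: indicator_def)
    ultimately show ?thesis unfolding g_def by simp
  qed
  have "h \<in> borel_measurable lebesgue" and "g \<in> borel_measurable lebesgue"
    using B_sets unfolding h_def g_def
    by (intro borel_measurable_sum powr_real_measurable; simp)+
  with QBFS h_le_g have "N h \<le> N g"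
    unfolding ball_QBFS_def by simp
  have "ennreal (\<Sum>i<m. c i * nX N (B i)) = (\<Sum>i<m. ennreal (c i * nX N (B i)))"
    using c by (intro sum_ennreal[symmetric]) (auto simp: nX_def)
  also have "\<dots> = (\<Sum>i<m. N (\<lambda>x. c i * indicator (B i) x))"
    using c by (intro sum.cong) (simp_all add: ball_QBFS_scaled_indicator[OF QBFS \<Delta> B])
  also have "\<dots> \<le> ennreal C * N (\<lambda>x. \<Sum>i<m. \<bar>c i * indicator (B i) x\<bar>)"
    using B_sets by (intro conc[unfolded finitely_concave_def, rule_format]) simp
  also have "(\<lambda>x. \<Sum>i<m. \<bar>c i * indicator (B i) x\<bar>) = h"
    unfolding h_def using c by (intro ext sum.cong) (auto simp: abs_mult)
  also have "ennreal C * N h \<le> ennreal C * N g"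
    using \<open>N h \<le> N g\<close> by (rule mult_left_mono) simp
  finally show ?thesis
    unfolding g_def .
qed

lemma L_norm_le_Ls_norm:
  assumes QBFS: "ball_QBFS A \<Delta> N" and \<Delta>: "\<Delta> \<in> sets lebesgue" and "0 < s"
  shows "L_norm N A \<Delta> q d f \<le> Ls_norm N A \<Delta> q d s f"
  unfolding L_norm_def
proof (rule SUP_least)
  fix B
  assume B: "B \<in> dil_balls A \<Delta>"
  show "ennreal (measure lebesgue B / nX N B * osc_q q d B f) \<le> Ls_norm N A \<Delta> q d s f"
  proof (cases "nX N B = 0")
    case True
    then show ?thesis by simp
  next
    case False
    then have "0 < nX N B" by (simp add: nX_def order_le_neq_trans)
    have single_ball: "(\<lambda>x. (\<Sum>i<1::nat. (1 / nX N B) powr s * indicator B x) powr (1 / s))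
        = (\<lambda>x. 1 / nX N B * indicator B x)"
      using \<open>0 < nX N B\<close> \<open>0 < s\<close> by (auto simp: indicator_def powr_powr)
    have normalised: "N (\<lambda>x. 1 / nX N B * indicator B x) = 1"
      using ball_QBFS_scaled_indicator[OF QBFS \<Delta> B, of "1 / nX N B"] \<open>0 < nX N B\<close> by simp
    show ?thesis
      unfolding Ls_norm_def
      by (rule SUP_upper2[where i="(1::nat, \<lambda>_. B, \<lambda>_. 1::real)"])
        (use B in simp, simp only: case_prod_conv single_ball normalised, simp)
  qed
qed

text \<open>The factor \<open>lam j / nX N (B j) * nX N (B j)\<close> is \<open>lam j\<close> unless \<open>nX N (B j) = 0\<close>;
  then the division by zero makes the \<open>j\<close>-th summand on the left vanish as well.\<close>

lemma sum_weighted_osc_le: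
  fixes m :: nat
  assumes lam: "\<And>j. j < m \<Longrightarrow> 0 \<le> lam j"
    and term_le: "\<And>j. j < m \<Longrightarrow> measure lebesgue (B j) / nX N (B j) * osc_q q d (B j) f \<le> L"
  shows "(\<Sum>j<m. lam j * measure lebesgue (B j) / nX N (B j) * osc_q q d (B j) f)
    \<le> (\<Sum>j<m. lam j / nX N (B j) * nX N (B j)) * L"
  unfolding sum_distrib_right
proof (rule sum_mono)
  fix j
  assume "j \<in> {..<m}"
  have "lam j * measure lebesgue (B j) / nX N (B j) * osc_q q d (B j) f
      = lam j / nX N (B j) * nX N (B j) * (measure lebesgue (B j) / nX N (B j) * osc_q q d (B j) f)"
    by (cases "nX N (B j) = 0") simp_all
  also have "\<dots> \<le> lam j / nX N (B j) * nX N (B j) * L"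
    using lam term_le \<open>j \<in> {..<m}\<close> by (intro mult_left_mono) (auto simp: nX_def)
  finally show "lam j * measure lebesgue (B j) / nX N (B j) * osc_q q d (B j) f
      \<le> lam j / nX N (B j) * nX N (B j) * L" .
qed

lemma Ls_norm_quotient_le:
  fixes m :: nat
  assumes QBFS: "ball_QBFS A \<Delta> N" and \<Delta>: "\<Delta> \<in> sets lebesgue"
    and conc: "finitely_concave C N" and "0 < C" and "0 < s" and "s \<le> 1"
    and B: "\<And>i. i < m \<Longrightarrow> B i \<in> dil_balls A \<Delta>" and lam: "\<And>i. i < m \<Longrightarrow> 0 \<le> lam i"
    and term_le: "\<And>B. B \<in> dil_balls A \<Delta> \<Longrightarrow> measure lebesgue B / nX N B * osc_q q d B f \<le> L"
    and "0 \<le> L"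
  shows "(\<Sum>j<m. lam j * measure lebesgue (B j) / nX N (B j) * osc_q q d (B j) f)
      / enn2real (N (\<lambda>x. (\<Sum>i<m. (lam i / nX N (B i)) powr s * indicator (B i) x) powr (1 / s)))
    \<le> C * L"
proof -
  define c where "c i = lam i / nX N (B i)" for i
  define num where "num = (\<Sum>j<m. lam j * measure lebesgue (B j) / nX N (B j) * osc_q q d (B j) f)"
  define G where
    "G = N (\<lambda>x. (\<Sum>i<m. (lam i / nX N (B i)) powr s * indicator (B i) x) powr (1 / s))"
  have c_nonneg: "0 \<le> c i" if "i < m" for i
    using lam[OF that] by (simp add: c_def nX_def)
  have num_le: "num \<le> (\<Sum>j<m. c j * nX N (B j)) * L"
    unfolding num_def c_def using lam B term_le by (intro sum_weighted_osc_le) auto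
  have "num / enn2real G \<le> C * L"
  proof (cases "enn2real G = 0")
    case True
    then show ?thesis using \<open>0 < C\<close> \<open>0 \<le> L\<close> by simp
  next
    case False
    then have "0 < enn2real G" and "G = ennreal (enn2real G)"
      by (auto simp: order_le_neq_trans ennreal_enn2real_if)
    with finitely_concave_sum_nX_le[OF QBFS \<Delta> conc \<open>0 < s\<close> \<open>s \<le> 1\<close>, of m B c] B c_nonneg
    have "ennreal (\<Sum>i<m. c i * nX N (B i)) \<le> ennreal (C * enn2real G)"
      using \<open>0 < C\<close> by (simp add: G_def c_def ennreal_mult)
    then have "(\<Sum>i<m. c i * nX N (B i)) \<le> C * enn2real G"
      using \<open>0 < C\<close> by simp
    with num_le \<open>0 \<le> L\<close> have "num \<le> C * enn2real G * L"
      by (meson mult_right_mono order_trans)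
    with \<open>0 < enn2real G\<close> show ?thesis
      by (simp add: pos_divide_le_eq mult_ac)
  qed
  then show ?thesis
    unfolding num_def G_def .
qed

lemma Ls_norm_le_L_norm:
  assumes QBFS: "ball_QBFS A \<Delta> N" and \<Delta>: "\<Delta> \<in> sets lebesgue"
    and conc: "finitely_concave C N" and "0 < C" and "0 < s" and "s \<le> 1"
  shows "Ls_norm N A \<Delta> q d s f \<le> ennreal C * L_norm N A \<Delta> q d f"
proof (cases "L_norm N A \<Delta> q d f = \<infinity>")
  case True
  with \<open>0 < C\<close> show ?thesis by (simp add: ennreal_mult_top)
next
  case False
  define L where "L = enn2real (L_norm N A \<Delta> q d f)"
  have L_eq: "L_norm N A \<Delta> q d f = ennreal L"
    unfolding L_def using False by (simp add: ennreal_enn2real less_top)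
  have term_le: "measure lebesgue B / nX N B * osc_q q d B f \<le> L" if "B \<in> dil_balls A \<Delta>" for B
  proof -
    have "ennreal (measure lebesgue B / nX N B * osc_q q d B f) \<le> ennreal L"
      unfolding L_eq[symmetric] L_norm_def using that by (rule SUP_upper)
    then show ?thesis by (simp add: L_def)
  qed
  show ?thesis
    unfolding Ls_norm_def L_eq
    using Ls_norm_quotient_le[OF QBFS \<Delta> conc \<open>0 < C\<close> \<open>0 < s\<close> \<open>s \<le> 1\<close> _ _ term_le] \<open>0 < C\<close>
    by (intro SUP_least) (auto simp: L_def ennreal_mult[symmetric] intro!: ennreal_leI)
qed

lemma Ls_norm_equivalent_L_norm:
  assumes QBFS: "ball_QBFS A \<Delta> N" and \<Delta>: "\<Delta> \<in> sets lebesgue"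
    and "concave_QBFS N" and "0 < s" and "s \<le> 1"
  obtains C where "0 < C"
    and "\<And>q d f. Ls_norm N A \<Delta> q d s f \<le> ennreal C * L_norm N A \<Delta> q d f"
    and "\<And>q d f. L_norm N A \<Delta> q d f \<le> ennreal C * Ls_norm N A \<Delta> q d s f"
proof -
  obtain C where "0 < C" and conc: "finitely_concave C N"
    using \<open>concave_QBFS N\<close> by (rule concave_QBFS_imp_finitely_concave)
  show ?thesis
  proof (rule that[of "max 1 C"])
    show "0 < max 1 C"
      by simp
    fix q d f
    have "Ls_norm N A \<Delta> q d s f \<le> ennreal C * L_norm N A \<Delta> q d f"
      using Ls_norm_le_L_norm[OF QBFS \<Delta> conc \<open>0 < C\<close> \<open>0 < s\<close> \<open>s \<le> 1\<close>] .
    also have "\<dots> \<le> ennreal (max 1 C) * L_norm N A \<Delta> q d f"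
      by (intro mult_right_mono ennreal_leI) auto
    finally show "Ls_norm N A \<Delta> q d s f \<le> ennreal (max 1 C) * L_norm N A \<Delta> q d f" .
    have "L_norm N A \<Delta> q d f \<le> ennreal 1 * Ls_norm N A \<Delta> q d s f"
      using L_norm_le_Ls_norm[OF QBFS \<Delta> \<open>0 < s\<close>] by simp
    also have "\<dots> \<le> ennreal (max 1 C) * Ls_norm N A \<Delta> q d s f"
      by (intro mult_right_mono ennreal_leI) auto
    finally show "L_norm N A \<Delta> q d f \<le> ennreal (max 1 C) * Ls_norm N A \<Delta> q d s f" .
  qed
qed

theorem proposition3p9:
  fixes A :: "real^'n^'n" and \<Delta> :: "(real^'n) set"
    and N :: "(real^'n \<Rightarrow> real) \<Rightarrow> ennreal"
    and r q s :: real and d :: nat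
  assumes "dilation A"
    and "origin_ellipsoid \<Delta>" and "emeasure lebesgue \<Delta> = 1"
    and "1 < r" and "\<Delta> \<subseteq> (\<lambda>y. r *\<^sub>R y) ` \<Delta>" and "(\<lambda>y. r *\<^sub>R y) ` \<Delta> \<subseteq> (\<lambda>y. A *v y) ` \<Delta>"
    and "ball_QBFS A \<Delta> N" and "concave_QBFS N"
    and "1 \<le> q" and "0 < s" and "s \<le> 1"
  shows "Ls_space N A \<Delta> q d s = L_space N A \<Delta> q d \<and>
    (\<exists>C>0. \<forall>f\<in>Lq_loc q.
        Ls_norm N A \<Delta> q d s f \<le> ennreal C * L_norm N A \<Delta> q d f \<and>
        L_norm N A \<Delta> q d f \<le> ennreal C * Ls_norm N A \<Delta> q d s f)"
proof -
  have \<Delta>: "\<Delta> \<in> sets lebesgue"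
    using \<open>origin_ellipsoid \<Delta>\<close> by (rule origin_ellipsoid_in_sets_lebesgue)
  obtain C where "0 < C"
    and Ls_le: "\<And>q d f. Ls_norm N A \<Delta> q d s f \<le> ennreal C * L_norm N A \<Delta> q d f"
    and L_le: "\<And>q d f. L_norm N A \<Delta> q d f \<le> ennreal C * Ls_norm N A \<Delta> q d s f"
    using Ls_norm_equivalent_L_norm[OF \<open>ball_QBFS A \<Delta> N\<close> \<Delta> \<open>concave_QBFS N\<close> \<open>0 < s\<close> \<open>s \<le> 1\<close>]
    by blast
  have finite_if_dominated: "a < \<infinity>" if "a \<le> ennreal C * b" and "b < \<infinity>" for a b :: ennreal
    using that by (auto simp: ennreal_mult_less_top intro: le_less_trans)
  have "Ls_norm N A \<Delta> q d s f < \<infinity> \<longleftrightarrow> L_norm N A \<Delta> q d f < \<infinity>" for f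
    using finite_if_dominated[OF Ls_le] finite_if_dominated[OF L_le] by blast
  then have "Ls_space N A \<Delta> q d s = L_space N A \<Delta> q d"
    unfolding Ls_space_def L_space_def by blast
  with \<open>0 < C\<close> Ls_le L_le show ?thesis
    by blast
qed

end
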